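(* Let $X$ be a shift space over $\mathcal{A}$, $\sigma:\mathcal{A}^*\to\mathcal{B}^*$ an injective and strongly left proper morphism with first letter $\ell$, $Y$ the image of $X$ under $\sigma$, and $v\in\mathcal{L}(X)$ bispecial. If $(s,p)\in\mathcal{T}^-_v(\sigma)\times\mathcal{T}^+_v(\sigma)$ is such that $u=s\sigma(v)p$ is an extended image of $v$, then the extension graph $\mathcal{E}_Y(u)$ is the image of $\mathcal{E}_{X,s,p}(v)$ under the graph morphism $\varphi_{v,s,p}:\mathcal{E}_{X,s,p}(v)\to\mathcal{E}_Y(u)$ which, for every child $s'$ of $s$ in $\overline{\mathcal{T}^-_v(\sigma)}$, maps all left vertices belonging to $E^-_{X,s'}(v)$ to the left vertex labeled by the letter $a\in\mathcal{B}$ such that $s'\in\mathcal{B}^*as$, and, for every child $p'$ of $p$ in $\overline{\mathcal{T}^+_v(\sigma)}$, maps all right vertices belonging to $E^+_{X,p'}(v)$ to the right vertex labeled by the letter $b\in\mathcal{B}$ such that $p'\in pb\mathcal{B}^*$. In particular, if $\mathcal{T}^-_v(\sigma)=\{s_0\}$ and $\mathcal{T}^+_v(\sigma)=\{p_0\}$, then $v$ has a unique bispecial extended image $u$ and the associated morphism $\varphi_{v,s_0,p_0}$ is an isomorphism.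
   Context: A shift space over $\mathcal{A}$ is a closed shift-invariant $X\subseteq\mathcal{A}^{\mathbb{Z}}$ in which all letters occur, with factor set $\mathcal{L}(X)$. For $w\in\mathcal{L}(X)$: $E^-_X(w)=\{a:aw\in\mathcal{L}(X)\}$, $E^+_X(w)=\{b:wb\in\mathcal{L}(X)\}$, $E_X(w)=\{(a,b):awb\in\mathcal{L}(X)\}$; the extension graph $\mathcal{E}_X(w)$ is the bipartite graph on left vertices $E^-_X(w)$ and right vertices $E^+_X(w)$ with edge set $E_X(w)$; $w$ is bispecial if both $E^\pm_X(w)$ have at least two elements. Morphisms are non-erasing; $\sigma$ is strongly left proper with first letter $\ell$ if every $\sigma(a)$ begins with $\ell$ and contains $\ell$ exactly once. The image of $X$ under $\sigma$ is $Y=\{S^k\sigma(x):x\in X,0\le k<|\sigma(x_0)|\}$. Fact (antecedents): for every non-empty $u\in\mathcal{L}(Y)$ containing $\ell$ there is a unique triple $(s,v,p)$, $v\in\mathcal{L}(X)$, $u=s\sigma(v)p$, such that for some $(a,b)\in E_X(v)$, $s$ is a proper suffix of $\sigma(a)$ and $p$ a non-empty prefix of $\sigma(b)$; then $u$ is an extended image of $v$. Notation: $s(a_1,a_2)$, $p(b_1,b_2)$ are the longest common suffix of $\sigma(a_1),\sigma(a_2)$ and longest common prefix of $\sigma(b_1),\sigma(b_2)$. $\mathcal{T}^-_v(\sigma)=\{s(a_1,a_2):a_1\ne a_2\in E^-_X(v)\}$, $\mathcal{T}^+_v(\sigma)=\{p(b_1,b_2):b_1\ne b_2\in E^+_X(v)\}$,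 $\overline{\mathcal{T}^-_v(\sigma)}=\mathcal{T}^-_v(\sigma)\cup\sigma(E^-_X(v))$, $\overline{\mathcal{T}^+_v(\sigma)}=\mathcal{T}^+_v(\sigma)\cup\sigma(E^+_X(v))\ell$. The suffix order (resp. prefix order) makes $\overline{\mathcal{T}^-_v(\sigma)}$ (resp. $\overline{\mathcal{T}^+_v(\sigma)}$) a rooted tree whose root $s_0$ (resp. $p_0$) is its shortest word; a child of a node $s$ is an element $s'$ having $s$ as a proper suffix with no element strictly in between (similarly with prefixes). For words $x,y$: $E^-_{X,x}(v)=\{a\in E^-_X(v):\sigma(a)\in\mathcal{B}^*x\}$, $E^+_{X,y}(v)=\{b\in E^+_X(v):\sigma(b)\ell\in y\mathcal{B}^*\}$, $E_{X,x,y}(v)=E_X(v)\cap(E^-_{X,x}(v)\times E^+_{X,y}(v))$, and $\mathcal{E}_{X,x,y}(v)$ is the subgraph of $\mathcal{E}_X(v)$ with edge set $E_{X,x,y}(v)$ and vertices those incident to these edges. *)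

theory Defs
  imports "HOL-Analysis.Analysis" "HOL-Library.Sublist"
begin

definition shift :: "(int \<Rightarrow> 'a) \<Rightarrow> (int \<Rightarrow> 'a)" where
  "shift x = (\<lambda>n. x (n + 1))"

definition shift_space :: "(int \<Rightarrow> 'a) set \<Rightarrow> bool" where
  "shift_space X \<longleftrightarrow>
     closedin (product_topology (\<lambda>_. discrete_topology (UNIV :: 'a set)) UNIV) X
   \<and> shift ` X = X
   \<and> (\<forall>a. \<exists>x\<in>X. \<exists>n. x n = a)"

definition lang :: "(int \<Rightarrow> 'a) set \<Rightarrow> 'a list set" where
  "lang X = {w. \<exists>x\<in>X. \<exists>i::int. w = map (\<lambda>j. x (i + int j)) [0..<length w]}"

definition ext_left :: "(int \<Rightarrow> 'a) set \<Rightarrow> 'a list \<Rightarrow> 'a set" where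
  "ext_left X w = {a. a # w \<in> lang X}"

definition ext_right :: "(int \<Rightarrow> 'a) set \<Rightarrow> 'a list \<Rightarrow> 'a set" where
  "ext_right X w = {b. w @ [b] \<in> lang X}"

definition ext_pairs :: "(int \<Rightarrow> 'a) set \<Rightarrow> 'a list \<Rightarrow> ('a \<times> 'a) set" where
  "ext_pairs X w = {(a, b). a # w @ [b] \<in> lang X}"

definition bispecial :: "(int \<Rightarrow> 'a) set \<Rightarrow> 'a list \<Rightarrow> bool" where
  "bispecial X w \<longleftrightarrow> w \<in> lang X \<and> 2 \<le> card (ext_left X w) \<and> 2 \<le> card (ext_right X w)"

definition morph :: "('a \<Rightarrow> 'b list) \<Rightarrow> 'a list \<Rightarrow> 'b list" where
  "morph \<sigma> w = concat (map \<sigma> w)"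

definition non_erasing :: "('a \<Rightarrow> 'b list) \<Rightarrow> bool" where
  "non_erasing \<sigma> \<longleftrightarrow> (\<forall>a. \<sigma> a \<noteq> [])"

definition injective_morph :: "('a \<Rightarrow> 'b list) \<Rightarrow> bool" where
  "injective_morph \<sigma> \<longleftrightarrow> inj (morph \<sigma>)"

definition strongly_left_proper :: "('a \<Rightarrow> 'b list) \<Rightarrow> 'b \<Rightarrow> bool" where
  "strongly_left_proper \<sigma> l \<longleftrightarrow> (\<forall>a. \<exists>w. \<sigma> a = l # w \<and> l \<notin> set w)"

text \<open>Positions where the image blocks start: block k of sigma(x) starts at cumlen k,
 with block 0 starting at position 0.\<close>
definition cumlen :: "('a \<Rightarrow> 'b list) \<Rightarrow> (int \<Rightarrow> 'a) \<Rightarrow> int \<Rightarrow> int" where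
  "cumlen \<sigma> x k =
     (if 0 \<le> k then (\<Sum>i\<in>{0..<k}. int (length (\<sigma> (x i))))
      else - (\<Sum>i\<in>{k..<0}. int (length (\<sigma> (x i)))))"

text \<open>The bi-infinite sequence sigma(x) = ... sigma(x_{-1}) . sigma(x_0) sigma(x_1) ...\<close>
definition morph_seq :: "('a \<Rightarrow> 'b list) \<Rightarrow> (int \<Rightarrow> 'a) \<Rightarrow> int \<Rightarrow> 'b" where
  "morph_seq \<sigma> x n =
     (let k = (THE k. cumlen \<sigma> x k \<le> n \<and> n < cumlen \<sigma> x (k + 1))
      in \<sigma> (x k) ! nat (n - cumlen \<sigma> x k))"

definition image_shift :: "('a \<Rightarrow> 'b list) \<Rightarrow> (int \<Rightarrow> 'a) set \<Rightarrow> (int \<Rightarrow> 'b) set" where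
  "image_shift \<sigma> X =
     {(\<lambda>n. morph_seq \<sigma> x (n + int k)) | x k. x \<in> X \<and> k < length (\<sigma> (x 0))}"

definition ext_image_via ::
  "('a \<Rightarrow> 'b list) \<Rightarrow> (int \<Rightarrow> 'a) set \<Rightarrow> 'a list \<Rightarrow> 'b list \<Rightarrow> 'b list \<Rightarrow> bool" where
  "ext_image_via \<sigma> X v s p \<longleftrightarrow> v \<in> lang X \<and>
     (\<exists>(a, b) \<in> ext_pairs X v. strict_suffix s (\<sigma> a) \<and> p \<noteq> [] \<and> prefix p (\<sigma> b))"

definition extended_image ::
  "('a \<Rightarrow> 'b list) \<Rightarrow> (int \<Rightarrow> 'a) set \<Rightarrow> 'a list \<Rightarrow> 'b list \<Rightarrow> bool" where
  "extended_image \<sigma> X v u \<longleftrightarrow>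
     (\<exists>s p. u = s @ morph \<sigma> v @ p \<and> ext_image_via \<sigma> X v s p)"

definition lcsuffix :: "'b list \<Rightarrow> 'b list \<Rightarrow> 'b list" where
  "lcsuffix xs ys = rev (longest_common_prefix (rev xs) (rev ys))"

definition Tminus :: "('a \<Rightarrow> 'b list) \<Rightarrow> (int \<Rightarrow> 'a) set \<Rightarrow> 'a list \<Rightarrow> 'b list set" where
  "Tminus \<sigma> X v = {lcsuffix (\<sigma> a1) (\<sigma> a2) | a1 a2.
                      a1 \<in> ext_left X v \<and> a2 \<in> ext_left X v \<and> a1 \<noteq> a2}"

definition Tplus :: "('a \<Rightarrow> 'b list) \<Rightarrow> (int \<Rightarrow> 'a) set \<Rightarrow> 'a list \<Rightarrow> 'b list set" where
  "Tplus \<sigma> X v = {longest_common_prefix (\<sigma> b1) (\<sigma> b2) | b1 b2.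
                      b1 \<in> ext_right X v \<and> b2 \<in> ext_right X v \<and> b1 \<noteq> b2}"

definition Tminus_bar :: "('a \<Rightarrow> 'b list) \<Rightarrow> (int \<Rightarrow> 'a) set \<Rightarrow> 'a list \<Rightarrow> 'b list set" where
  "Tminus_bar \<sigma> X v = Tminus \<sigma> X v \<union> \<sigma> ` ext_left X v"

definition Tplus_bar ::
  "('a \<Rightarrow> 'b list) \<Rightarrow> 'b \<Rightarrow> (int \<Rightarrow> 'a) set \<Rightarrow> 'a list \<Rightarrow> 'b list set" where
  "Tplus_bar \<sigma> l X v = Tplus \<sigma> X v \<union> (\<lambda>b. \<sigma> b @ [l]) ` ext_right X v"

definition suffix_child :: "'b list set \<Rightarrow> 'b list \<Rightarrow> 'b list \<Rightarrow> bool" where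
  "suffix_child T s s' \<longleftrightarrow> s' \<in> T \<and> strict_suffix s s' \<and>
     \<not> (\<exists>t\<in>T. strict_suffix s t \<and> strict_suffix t s')"

definition prefix_child :: "'b list set \<Rightarrow> 'b list \<Rightarrow> 'b list \<Rightarrow> bool" where
  "prefix_child T p p' \<longleftrightarrow> p' \<in> T \<and> strict_prefix p p' \<and>
     \<not> (\<exists>t\<in>T. strict_prefix p t \<and> strict_prefix t p')"

definition ext_left_x ::
  "('a \<Rightarrow> 'b list) \<Rightarrow> (int \<Rightarrow> 'a) set \<Rightarrow> 'a list \<Rightarrow> 'b list \<Rightarrow> 'a set" where
  "ext_left_x \<sigma> X v x = {a \<in> ext_left X v. suffix x (\<sigma> a)}"

definition ext_right_y ::
  "('a \<Rightarrow> 'b list) \<Rightarrow> 'b \<Rightarrow> (int \<Rightarrow> 'a) set \<Rightarrow> 'a list \<Rightarrow> 'b list \<Rightarrow> 'a set" where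
  "ext_right_y \<sigma> l X v y = {b \<in> ext_right X v. prefix y (\<sigma> b @ [l])}"

definition ext_pairs_xy ::
  "('a \<Rightarrow> 'b list) \<Rightarrow> 'b \<Rightarrow> (int \<Rightarrow> 'a) set \<Rightarrow> 'a list \<Rightarrow> 'b list \<Rightarrow> 'b list
     \<Rightarrow> ('a \<times> 'a) set" where
  "ext_pairs_xy \<sigma> l X v x y =
     ext_pairs X v \<inter> (ext_left_x \<sigma> X v x \<times> ext_right_y \<sigma> l X v y)"

definition phi_left ::
  "('a \<Rightarrow> 'b list) \<Rightarrow> (int \<Rightarrow> 'a) set \<Rightarrow> 'a list \<Rightarrow> 'b list \<Rightarrow> 'a \<Rightarrow> 'b" where
  "phi_left \<sigma> X v s a = (THE c. \<exists>s'. suffix_child (Tminus_bar \<sigma> X v) s s' \<and>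
       a \<in> ext_left_x \<sigma> X v s' \<and> (\<exists>w. s' = w @ [c] @ s))"

definition phi_right ::
  "('a \<Rightarrow> 'b list) \<Rightarrow> 'b \<Rightarrow> (int \<Rightarrow> 'a) set \<Rightarrow> 'a list \<Rightarrow> 'b list \<Rightarrow> 'a \<Rightarrow> 'b" where
  "phi_right \<sigma> l X v p b = (THE c. \<exists>p'. prefix_child (Tplus_bar \<sigma> l X v) p p' \<and>
       b \<in> ext_right_y \<sigma> l X v p' \<and> (\<exists>w. p' = p @ [c] @ w))"

end

theory Submission
  imports Defs
begin

(* Since sigma is strongly left proper, every occurrence of l in a sigma-image starts the image
   of a letter; with injectivity this synchronizes every occurrence of c s sigma(v) p d inside
   sigma(z), z in L(X), with an occurrence of a v b in z such that c s is a suffix of sigma(a)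
   and p d a prefix of sigma(b) l.  So the extensions (c, d) of u = s sigma(v) p in Y are
   exactly the letters read just beyond s and p off the extensions (a, b) of v in X, which is
   the map phi_{v,s,p}.  If both trees are reduced to their roots s0 and p0, the images of
   distinct left (right) extensions of v diverge exactly at s0 (p0), so phi is injective and
   u is bispecial; conversely two distinct extensions of a bispecial extended image force its
   s and p to be a longest common suffix and prefix, i.e. s0 and p0. *)

lemma suffix_Cons_unique: "suffix (c # s) x \<Longrightarrow> suffix (c' # s) x \<Longrightarrow> c = c'"
  by (auto simp: suffix_def)

lemma prefix_snoc_unique: "prefix (p @ [d]) x \<Longrightarrow> prefix (p @ [d']) x \<Longrightarrow> d = d'"
  by (auto simp: prefix_def)

lemma strict_prefix_snoc_prefix: "strict_prefix p x \<Longrightarrow> \<exists>d. prefix (p @ [d]) x"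
  by (auto elim!: strict_prefixE')

lemma strict_suffix_Cons_suffix: "strict_suffix s x \<Longrightarrow> \<exists>c. suffix (c # s) x"
  using strict_prefix_snoc_prefix[of "rev s" "rev x"]
  by (auto simp: strict_suffix_to_prefix suffix_to_prefix)

lemma longest_common_prefix_append_same:
  "longest_common_prefix (p @ xs) (p @ ys) = p @ longest_common_prefix xs ys"
  by (induction p) auto

lemma longest_common_prefix_diverge:
  assumes "prefix (p @ [d1]) x1" "prefix (p @ [d2]) x2" "d1 \<noteq> d2"
  shows "longest_common_prefix x1 x2 = p"
  using assms by (auto elim!: prefixE simp: longest_common_prefix_append_same)

lemma longest_common_prefix_snoc:
  "e \<notin> set x \<Longrightarrow> e \<notin> set y \<Longrightarrow> x \<noteq> y \<Longrightarrow>
    longest_common_prefix (x @ [e]) (y @ [e]) = longest_common_prefix x y"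
proof (induction x arbitrary: y)
  case Nil
  then show ?case by (cases y) auto
next
  case (Cons a x)
  then show ?case by (cases y) auto
qed

lemma lcsuffix_suffix1: "suffix (lcsuffix xs ys) xs"
  unfolding lcsuffix_def suffix_to_prefix by (simp add: longest_common_prefix_prefix1)

lemma lcsuffix_suffix2: "suffix (lcsuffix xs ys) ys"
  unfolding lcsuffix_def suffix_to_prefix by (simp add: longest_common_prefix_prefix2)

lemma lcsuffix_max_suffix: "suffix t xs \<Longrightarrow> suffix t ys \<Longrightarrow> suffix t (lcsuffix xs ys)"
  unfolding lcsuffix_def suffix_to_prefix by (simp add: longest_common_prefix_max_prefix)

lemma lcsuffix_diverge:
  assumes "suffix (c1 # s) x1" "suffix (c2 # s) x2" "c1 \<noteq> c2"
  shows "lcsuffix x1 x2 = s"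
proof -
  have "prefix (rev s @ [ci]) (rev xi)" if "suffix (ci # s) xi" for ci xi
    using that by (simp add: suffix_to_prefix)
  then have "longest_common_prefix (rev x1) (rev x2) = rev s"
    using assms by (intro longest_common_prefix_diverge) auto
  then show ?thesis by (simp add: lcsuffix_def)
qed

section \<open>Strongly left proper morphisms\<close>

lemma morph_Nil [simp]: "morph \<sigma> [] = []"
  and morph_Cons [simp]: "morph \<sigma> (a # w) = \<sigma> a @ morph \<sigma> w"
  and morph_append [simp]: "morph \<sigma> (u @ w) = morph \<sigma> u @ morph \<sigma> w"
  by (simp_all add: morph_def)

lemma injective_morph_letter: "injective_morph \<sigma> \<Longrightarrow> \<sigma> a = \<sigma> b \<Longrightarrow> a = b"
  unfolding injective_morph_def using inj_eq[of "morph \<sigma>" "[a]" "[b]"] by simp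

context
  fixes \<sigma> :: "'a \<Rightarrow> 'b list" and l :: 'b
  assumes slp: "strongly_left_proper \<sigma> l"
begin

lemma strongly_left_properD: "\<exists>w. \<sigma> a = l # w \<and> l \<notin> set w"
  using slp unfolding strongly_left_proper_def by blast

lemma strongly_left_proper_non_erasing: "non_erasing \<sigma>"
  unfolding non_erasing_def by (metis strongly_left_properD list.distinct(1))

lemma morph_starts_with_marker: "z \<noteq> [] \<Longrightarrow> \<exists>r. morph \<sigma> z = l # r"
  using strongly_left_properD[of "hd z"] by (cases z) auto

lemma morph_append_marker: "\<exists>r. morph \<sigma> v @ l # q = l # r"
  using morph_starts_with_marker[of v] by (cases "v = []") auto

lemma marker_suffix_image:
  assumes "suffix (l # w) (\<sigma> a)"
  shows "l # w = \<sigma> a"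
proof -
  obtain w' where w': "\<sigma> a = l # w'" "l \<notin> set w'" using strongly_left_properD[of a] by blast
  then show ?thesis using assms set_mono_suffix by (fastforce simp: suffix_Cons)
qed

lemma strict_suffix_image_marker_free:
  assumes "strict_suffix s (\<sigma> a)"
  shows "l \<notin> set s"
proof
  assume "l \<in> set s"
  then obtain s1 s2 where s: "s = s1 @ l # s2" by (meson split_list)
  then have "suffix (l # s2) (\<sigma> a)"
    using assms s suffix_appendD[of s1 "l # s2"] by (auto simp: strict_suffix_def)
  then have "l # s2 = \<sigma> a" by (rule marker_suffix_image)
  then show False using assms s suffix_length_less by fastforce
qed

lemma prefix_image_shape:
  assumes "p \<noteq> []" "prefix p (\<sigma> b)"
  shows "\<exists>p'. p = l # p' \<and> l \<notin> set p'"
proof -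
  obtain w where w: "\<sigma> b = l # w" "l \<notin> set w" using strongly_left_properD[of b] by blast
  then show ?thesis using assms set_mono_prefix by (fastforce simp: prefix_Cons)
qed

lemma morph_split_at_marker:
  "morph \<sigma> z = A @ l # B \<Longrightarrow> \<exists>z1 z2. z = z1 @ z2 \<and> morph \<sigma> z1 = A \<and> morph \<sigma> z2 = l # B"
proof (induction z arbitrary: A)
  case Nil
  then show ?case by simp
next
  case (Cons a z)
  obtain w where w: "\<sigma> a = l # w" "l \<notin> set w" using strongly_left_properD[of a] by blast
  show ?case
  proof (cases A)
    case Nil
    then show ?thesis using Cons.prems by (intro exI[of _ "[]"] exI[of _ "a # z"]) auto
  next
    case (Cons c A')
    with Cons.prems w have A: "A = l # A'" and "w @ morph \<sigma> z = A' @ l # B" by auto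
    with w(2) obtain A'' where "A' = w @ A''" "morph \<sigma> z = A'' @ l # B"
      by (auto simp: append_eq_append_conv2 append_eq_Cons_conv)
    with Cons.IH obtain z1 z2 where "z = z1 @ z2" "morph \<sigma> z1 = A''" "morph \<sigma> z2 = l # B"
      by blast
    then show ?thesis using w A \<open>A' = w @ A''\<close> by (intro exI[of _ "a # z1"] exI[of _ z2]) auto
  qed
qed

lemma suffix_morph_snoc:
  assumes "l \<notin> set s" "suffix (c # s) (morph \<sigma> (z @ [a]))"
  shows "suffix (c # s) (\<sigma> a)"
proof -
  obtain w where w: "\<sigma> a = l # w" using strongly_left_properD[of a] by blast
  have "suffix (\<sigma> a) (morph \<sigma> (z @ [a]))" by (simp add: suffix_appendI)
  consider "suffix (c # s) (\<sigma> a)" | "suffix (l # w) (c # s)"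
    using suffix_same_cases[OF assms(2) \<open>suffix (\<sigma> a) _\<close>] w by auto
  then show ?thesis
  proof cases
    case 2
    then have "l # w = c # s" using assms(1) set_mono_suffix by (fastforce simp: suffix_Cons)
    then show ?thesis using w by simp
  qed
qed

lemma prefix_morph_Cons:
  assumes "p = l # p'" "l \<notin> set p'" "prefix (p @ [d]) (morph \<sigma> (b # z) @ [l])"
  shows "prefix (p @ [d]) (\<sigma> b @ [l])"
proof -
  obtain w where w: "\<sigma> b = l # w" using strongly_left_properD[of b] by blast
  \<comment> \<open>What follows \<open>\<sigma>(b)\<close> starts with l: the image of the next letter, or the appended l.\<close>
  have "prefix (\<sigma> b @ [l]) (morph \<sigma> (b # z) @ [l])"
    using morph_starts_with_marker[of z] by (cases "z = []") auto
  consider "prefix (p @ [d]) (\<sigma> b @ [l])" | "prefix (w @ [l]) (p' @ [d])"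
    using prefix_same_cases[OF assms(3) \<open>prefix (\<sigma> b @ [l]) _\<close>] assms(1) w by auto
  then show ?thesis
  proof cases
    case 2
    then have "w @ [l] = p' @ [d]" using assms(2) set_mono_prefix by (fastforce simp: prefix_snoc)
    then show ?thesis using assms(1) w by simp
  qed
qed

text \<open>The occurrences of l starting \<open>\<sigma>(v) p\<close> and p start images of letters, so they cut z at
  letter boundaries; injectivity identifies the middle piece with v.\<close>

lemma morph_synchronization:
  assumes inj: "injective_morph \<sigma>" and "l \<notin> set s" and p: "p = l # p'" "l \<notin> set p'"
    and z: "morph \<sigma> z = pre @ c # s @ morph \<sigma> v @ p @ d # suf"
  shows "\<exists>z1 a b z3. z = z1 @ a # v @ b # z3 \<and> suffix (c # s) (\<sigma> a) \<and>
    prefix (p @ [d]) (\<sigma> b @ [l])"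
proof -
  obtain r where r: "morph \<sigma> v @ l # p' @ d # suf = l # r" using morph_append_marker by blast
  with z p have "morph \<sigma> z = (pre @ c # s) @ l # r" by simp
  from morph_split_at_marker[OF this] obtain zA zB
    where zAB: "z = zA @ zB" "morph \<sigma> zA = pre @ c # s" "morph \<sigma> zB = l # r"
    by blast
  from zAB(3) r have "morph \<sigma> zB = morph \<sigma> v @ l # p' @ d # suf" by simp
  from morph_split_at_marker[OF this] obtain zv zC
    where zC: "zB = zv @ zC" "morph \<sigma> zv = morph \<sigma> v" "morph \<sigma> zC = p @ d # suf"
    using p by auto
  have "zv = v" using zC(2) inj by (simp add: injective_morph_def inj_eq)
  obtain zA' a where a: "zA = zA' @ [a]"
    using zAB(2) by (cases zA rule: rev_cases) auto
  obtain b z3 where b: "zC = b # z3"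
    using zC(3) by (cases zC) auto
  have "suffix (c # s) (\<sigma> a)"
    using assms(2) zAB(2) a by (intro suffix_morph_snoc[of s c zA']) (auto simp: suffix_def)
  moreover have "prefix (p @ [d]) (\<sigma> b @ [l])"
    using p zC(3) b by (intro prefix_morph_Cons[of p p' d b z3]) auto
  moreover have "z = zA' @ a # v @ b # z3" using zAB zC \<open>zv = v\<close> a b by simp
  ultimately show ?thesis by blast
qed

lemma lcsuffix_images_strict_suffix:
  assumes "injective_morph \<sigma>" "a1 \<noteq> a2"
  shows "strict_suffix (lcsuffix (\<sigma> a1) (\<sigma> a2)) (\<sigma> a1)"
proof -
  obtain w where w: "\<sigma> a1 = l # w" using strongly_left_properD[of a1] by blast
  have "lcsuffix (\<sigma> a1) (\<sigma> a2) \<noteq> \<sigma> a1"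
  proof
    assume "lcsuffix (\<sigma> a1) (\<sigma> a2) = \<sigma> a1"
    then have "suffix (l # w) (\<sigma> a2)" using lcsuffix_suffix2[of "\<sigma> a1" "\<sigma> a2"] w by simp
    then have "l # w = \<sigma> a2" by (rule marker_suffix_image)
    then have "\<sigma> a1 = \<sigma> a2" using w by simp
    then show False using injective_morph_letter[OF assms(1)] assms(2) by blast
  qed
  then show ?thesis using lcsuffix_suffix1 by (auto simp: strict_suffix_def)
qed

lemma longest_common_prefix_images_shape:
  "\<exists>p'. longest_common_prefix (\<sigma> b1) (\<sigma> b2) = l # p' \<and> l \<notin> set p'"
proof -
  obtain w1 where w1: "\<sigma> b1 = l # w1" "l \<notin> set w1" using strongly_left_properD[of b1] by blast
  obtain w2 where w2: "\<sigma> b2 = l # w2" using strongly_left_properD[of b2] by blast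
  have "l \<notin> set (longest_common_prefix w1 w2)"
    using w1(2) set_mono_prefix[OF longest_common_prefix_prefix1[of w1 w2]] by blast
  then show ?thesis using w1 w2 by simp
qed

lemma longest_common_prefix_images_snoc:
  assumes "injective_morph \<sigma>" "b1 \<noteq> b2"
  shows "longest_common_prefix (\<sigma> b1 @ [l]) (\<sigma> b2 @ [l]) =
    longest_common_prefix (\<sigma> b1) (\<sigma> b2)"
proof -
  obtain w1 where w1: "\<sigma> b1 = l # w1" "l \<notin> set w1" using strongly_left_properD[of b1] by blast
  obtain w2 where w2: "\<sigma> b2 = l # w2" "l \<notin> set w2" using strongly_left_properD[of b2] by blast
  have "\<sigma> b1 \<noteq> \<sigma> b2" using injective_morph_letter[OF assms(1)] assms(2) by blast
  then have "w1 \<noteq> w2" using w1 w2 by simp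
  then show ?thesis using w1 w2 longest_common_prefix_snoc by simp
qed

end

definition factor :: "(int \<Rightarrow> 'c) \<Rightarrow> int \<Rightarrow> nat \<Rightarrow> 'c list" where
  "factor x i n = map (\<lambda>j. x (i + int j)) [0..<n]"

lemma length_factor [simp]: "length (factor x i n) = n"
  by (simp add: factor_def)

lemma factor_0 [simp]: "factor x i 0 = []"
  by (simp add: factor_def)

lemma factor_Suc: "factor x i (Suc n) = factor x i n @ [x (i + int n)]"
  by (simp add: factor_def)

lemma factor_add: "factor x i (m + n) = factor x i m @ factor x (i + int m) n"
  by (induction n) (simp_all add: factor_Suc ac_simps)

lemma factor_shift: "factor (\<lambda>n. x (n + k)) i n = factor x (i + k) n"
  by (simp add: factor_def ac_simps)

lemma sublist_factor:
  assumes "sublist u (factor x i n)"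
  shows "\<exists>j. u = factor x j (length u)"
proof -
  obtain pr sf where eq: "factor x i n = pr @ u @ sf" using assms by (auto simp: sublist_def)
  then have "n = length pr + (length u + length sf)" by (metis length_append length_factor)
  then have "pr @ u @ sf = factor x i (length pr) @ factor x (i + int (length pr)) (length u) @
      factor x (i + int (length pr) + int (length u)) (length sf)"
    using eq by (simp add: factor_add)
  then have "u = factor x (i + int (length pr)) (length u)" by (simp add: append_eq_append_conv)
  then show ?thesis by blast
qed

lemma factor_sublist_factor:
  assumes "i' \<le> i" "i + int n \<le> i' + int n'"
  shows "sublist (factor x i n) (factor x i' n')"
proof -
  define d where "d = nat (i - i')"
  have "n' = d + n + (n' - d - n)" and i: "i' + int d = i" using assms by (auto simp: d_def)
  then have "factor x i' n' = factor x i' d @ factor x i n @ factor x (i + int n) (n' - d - n)"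
    by (metis factor_add add.assoc)
  then show ?thesis by (metis sublist_appendI)
qed

lemma mem_lang_iff: "w \<in> lang X \<longleftrightarrow> (\<exists>x\<in>X. \<exists>i. w = factor x i (length w))"
  by (simp add: lang_def factor_def)

lemma factor_in_lang: "x \<in> X \<Longrightarrow> factor x i n \<in> lang X"
  unfolding mem_lang_iff by auto

lemma lang_sublist:
  assumes "w \<in> lang X" "sublist u w"
  shows "u \<in> lang X"
proof -
  obtain x i where "x \<in> X" "w = factor x i (length w)" using assms(1) mem_lang_iff by blast
  with assms(2) obtain j where "u = factor x j (length u)" using sublist_factor by metis
  with \<open>x \<in> X\<close> show ?thesis by (metis factor_in_lang)
qed

lemma lang_snoc:
  assumes "w \<in> lang X"
  shows "\<exists>b. w @ [b] \<in> lang X"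
proof -
  obtain x i where "x \<in> X" "w = factor x i (length w)" using assms mem_lang_iff by blast
  then have "w @ [x (i + int (length w))] \<in> lang X" by (metis factor_Suc factor_in_lang)
  then show ?thesis ..
qed

lemma factor_pred_Suc: "factor x (i - 1) (Suc n) = x (i - 1) # factor x i n"
  by (induction n) (simp_all add: factor_Suc algebra_simps)

lemma lang_Cons:
  assumes "w \<in> lang X"
  shows "\<exists>a. a # w \<in> lang X"
proof -
  obtain x i where "x \<in> X" "w = factor x i (length w)" using assms mem_lang_iff by blast
  then have "x (i - 1) # w \<in> lang X" by (metis factor_pred_Suc factor_in_lang)
  then show ?thesis ..
qed

lemma ext_left_eq_fst_ext_pairs: "ext_left X w = fst ` ext_pairs X w"
proof (intro equalityI subsetI)
  fix a assume "a \<in> ext_left X w"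
  then obtain b where "(a # w) @ [b] \<in> lang X" unfolding ext_left_def by (blast dest: lang_snoc)
  then show "a \<in> fst ` ext_pairs X w" unfolding ext_pairs_def by force
next
  fix a assume "a \<in> fst ` ext_pairs X w"
  then obtain b where "a # w @ [b] \<in> lang X" unfolding ext_pairs_def by auto
  then show "a \<in> ext_left X w" unfolding ext_left_def mem_Collect_eq
    by (rule lang_sublist) (metis sublist_append_rightI append_Cons)
qed

lemma ext_right_eq_snd_ext_pairs: "ext_right X w = snd ` ext_pairs X w"
proof (intro equalityI subsetI)
  fix b assume "b \<in> ext_right X w"
  then obtain a where "a # w @ [b] \<in> lang X" unfolding ext_right_def by (blast dest: lang_Cons)
  then show "b \<in> snd ` ext_pairs X w" unfolding ext_pairs_def by force
next
  fix b assume "b \<in> snd ` ext_pairs X w"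
  then obtain a where "a # w @ [b] \<in> lang X" unfolding ext_pairs_def by auto
  then show "b \<in> ext_right X w" unfolding ext_right_def mem_Collect_eq
    by (rule lang_sublist) (metis sublist_append_leftI append_Cons append_Nil)
qed

section \<open>The language of the image of a shift space\<close>

lemma cumlen_0 [simp]: "cumlen \<sigma> x 0 = 0"
  by (simp add: cumlen_def)

lemma cumlen_Suc: "cumlen \<sigma> x (k + 1) = cumlen \<sigma> x k + int (length (\<sigma> (x k)))"
proof -
  consider "0 \<le> k" | "k = -1" | "k < -1" by linarith
  then show ?thesis
  proof cases
    case 1
    then have "{0..<k + 1} = insert k {0..<k}" by auto
    with 1 show ?thesis by (simp add: cumlen_def)
  next
    case 2
    then have "{k..<0} = {k}" by auto
    with 2 show ?thesis by (simp add: cumlen_def)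
  next
    case 3
    then have "{k..<0} = insert k {k + 1..<0}" by auto
    with 3 show ?thesis by (simp add: cumlen_def)
  qed
qed

lemma cumlen_add:
  "cumlen \<sigma> x (k + int n) = cumlen \<sigma> x k + int (length (morph \<sigma> (factor x k n)))"
proof (induction n)
  case (Suc n)
  have "k + int (Suc n) = (k + int n) + 1" by simp
  then have "cumlen \<sigma> x (k + int (Suc n)) =
      cumlen \<sigma> x (k + int n) + int (length (\<sigma> (x (k + int n))))"
    by (simp only: cumlen_Suc)
  with Suc.IH show ?case by (simp add: factor_Suc)
qed simp

lemma length_morph_ge:
  assumes "non_erasing \<sigma>"
  shows "length w \<le> length (morph \<sigma> w)"
proof (induction w)
  case (Cons a w)
  have "\<sigma> a \<noteq> []" using assms by (simp add: non_erasing_def)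
  with Cons.IH show ?case by (cases "\<sigma> a") auto
qed simp

lemma cumlen_strict_mono:
  assumes "non_erasing \<sigma>"
  shows "strict_mono (cumlen \<sigma> x)"
proof (rule strict_monoI)
  fix k k' :: int assume "k < k'"
  then obtain n where k': "k' = k + int (Suc n)" by (metis zless_iff_Suc_zadd)
  have "Suc n \<le> length (morph \<sigma> (factor x k (Suc n)))"
    using length_morph_ge[OF assms] by (metis length_factor)
  then show "cumlen \<sigma> x k < cumlen \<sigma> x k'" unfolding k' cumlen_add by linarith
qed

lemma morph_seq_eq:
  assumes "non_erasing \<sigma>" "cumlen \<sigma> x k \<le> n" "n < cumlen \<sigma> x (k + 1)"
  shows "morph_seq \<sigma> x n = \<sigma> (x k) ! nat (n - cumlen \<sigma> x k)"
proof -
  note mono = strict_mono_less_eq[OF cumlen_strict_mono[OF assms(1)]]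
  have "(THE k. cumlen \<sigma> x k \<le> n \<and> n < cumlen \<sigma> x (k + 1)) = k"
  proof (rule the_equality)
    fix k' assume k': "cumlen \<sigma> x k' \<le> n \<and> n < cumlen \<sigma> x (k' + 1)"
    show "k' = k"
    proof (rule ccontr)
      assume "k' \<noteq> k"
      then consider "k' + 1 \<le> k" | "k + 1 \<le> k'" by linarith
      then show False
      proof cases
        case 1
        then have "cumlen \<sigma> x (k' + 1) \<le> cumlen \<sigma> x k" using mono by blast
        with assms(2) k' show False by linarith
      next
        case 2
        then have "cumlen \<sigma> x (k + 1) \<le> cumlen \<sigma> x k'" using mono by blast
        with assms(3) k' show False by linarith
      qed
    qed
  qed (use assms in simp)
  then show ?thesis by (simp add: morph_seq_def Let_def)
qed

lemma factor_morph_seq_letter: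
  assumes "non_erasing \<sigma>"
  shows "factor (morph_seq \<sigma> x) (cumlen \<sigma> x k) (length (\<sigma> (x k))) = \<sigma> (x k)"
proof (rule nth_equalityI)
  fix t assume "t < length (factor (morph_seq \<sigma> x) (cumlen \<sigma> x k) (length (\<sigma> (x k))))"
  then have t: "t < length (\<sigma> (x k))" by simp
  then have "morph_seq \<sigma> x (cumlen \<sigma> x k + int t) = \<sigma> (x k) ! t"
    using morph_seq_eq[OF assms, of x k] cumlen_Suc[of \<sigma> x k] by simp
  then show "factor (morph_seq \<sigma> x) (cumlen \<sigma> x k) (length (\<sigma> (x k))) ! t = \<sigma> (x k) ! t"
    using t by (simp add: factor_def)
qed simp

lemma factor_morph_seq:
  assumes "non_erasing \<sigma>"
  shows "factor (morph_seq \<sigma> x) (cumlen \<sigma> x k) (length (morph \<sigma> (factor x k m))) =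
    morph \<sigma> (factor x k m)"
proof (induction m)
  case (Suc m)
  then show ?case
    using factor_morph_seq_letter[OF assms, of x "k + int m"] cumlen_add[of \<sigma> x k m]
    by (simp add: factor_Suc factor_add)
qed simp

lemma lang_image_shift:
  assumes "non_erasing \<sigma>"
  shows "w \<in> lang (image_shift \<sigma> X) \<longleftrightarrow> (\<exists>z\<in>lang X. sublist w (morph \<sigma> z))"
proof
  assume "w \<in> lang (image_shift \<sigma> X)"
  then obtain x k i where x: "x \<in> X"
    and w: "w = factor (\<lambda>n. morph_seq \<sigma> x (n + int k)) i (length w)"
    unfolding mem_lang_iff image_shift_def by blast
  define j where "j = i + int k"
  \<comment> \<open>Images of letters are nonempty, so the image of the factor of x on \<open>[-M, N)\<close> covers the
    positions \<open>[j, j + |w|)\<close> of \<open>\<sigma>(x)\<close>.\<close>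
  define M where "M = nat \<bar>j\<bar>"
  define N where "N = nat \<bar>j + int (length w)\<bar>"
  have "int M \<le> int (length (morph \<sigma> (factor x (- int M) M)))"
    using length_morph_ge[OF assms] by (metis length_factor of_nat_mono)
  then have lower: "cumlen \<sigma> x (- int M) \<le> j"
    using cumlen_add[of \<sigma> x "- int M" M] unfolding M_def by simp
  have "int N \<le> int (length (morph \<sigma> (factor x 0 N)))"
    using length_morph_ge[OF assms] by (metis length_factor of_nat_mono)
  then have upper: "j + int (length w) \<le> cumlen \<sigma> x (- int M + int (M + N))"
    using cumlen_add[of \<sigma> x 0 N] unfolding N_def by simp
  let ?z = "factor x (- int M) (M + N)"
  have "j + int (length w) \<le> cumlen \<sigma> x (- int M) + int (length (morph \<sigma> ?z))"
    using upper cumlen_add[of \<sigma> x "- int M" "M + N"] by simp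
  with lower have "sublist (factor (morph_seq \<sigma> x) j (length w))
      (factor (morph_seq \<sigma> x) (cumlen \<sigma> x (- int M)) (length (morph \<sigma> ?z)))"
    by (rule factor_sublist_factor)
  moreover have "w = factor (morph_seq \<sigma> x) j (length w)"
    using w by (simp add: factor_shift j_def)
  ultimately have "sublist w (morph \<sigma> ?z)" by (simp add: factor_morph_seq[OF assms])
  then show "\<exists>z\<in>lang X. sublist w (morph \<sigma> z)" using x factor_in_lang by blast
next
  assume "\<exists>z\<in>lang X. sublist w (morph \<sigma> z)"
  then obtain z where z: "z \<in> lang X" "sublist w (morph \<sigma> z)" by blast
  then obtain x i where x: "x \<in> X" "z = factor x i (length z)" unfolding mem_lang_iff by blast
  with z(2) have "sublist w (factor (morph_seq \<sigma> x) (cumlen \<sigma> x i) (length (morph \<sigma> z)))"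
    by (metis factor_morph_seq[OF assms])
  then obtain j where "w = factor (\<lambda>n. morph_seq \<sigma> x (n + int 0)) j (length w)"
    using sublist_factor by fastforce
  moreover have "(\<lambda>n. morph_seq \<sigma> x (n + int 0)) \<in> image_shift \<sigma> X"
    using x assms unfolding image_shift_def non_erasing_def by blast
  ultimately show "w \<in> lang (image_shift \<sigma> X)" unfolding mem_lang_iff by blast
qed

section \<open>Extension graphs of extended images\<close>

lemma ext_image_via_marker:
  assumes slp: "strongly_left_proper \<sigma> l" and "ext_image_via \<sigma> X v s p"
  shows "l \<notin> set s" "\<exists>p'. p = l # p' \<and> l \<notin> set p'"
  using assms strict_suffix_image_marker_free[OF slp] prefix_image_shape[OF slp]
  unfolding ext_image_via_def by blast+

lemma ext_pairs_extended_image_iff: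
  assumes slp: "strongly_left_proper \<sigma> l" and inj: "injective_morph \<sigma>"
    and s: "l \<notin> set s" and p: "p = l # p'" "l \<notin> set p'"
  shows "(c, d) \<in> ext_pairs (image_shift \<sigma> X) (s @ morph \<sigma> v @ p) \<longleftrightarrow>
    (\<exists>(a, b)\<in>ext_pairs X v. suffix (c # s) (\<sigma> a) \<and> prefix (p @ [d]) (\<sigma> b @ [l]))"
proof -
  note lang_Y = lang_image_shift[OF strongly_left_proper_non_erasing[OF slp]]
  have "c # (s @ morph \<sigma> v @ p) @ [d] \<in> lang (image_shift \<sigma> X) \<longleftrightarrow>
    (\<exists>(a, b)\<in>ext_pairs X v. suffix (c # s) (\<sigma> a) \<and> prefix (p @ [d]) (\<sigma> b @ [l]))"
  proof
    assume "c # (s @ morph \<sigma> v @ p) @ [d] \<in> lang (image_shift \<sigma> X)"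
    then obtain z pre suf where z: "z \<in> lang X" "morph \<sigma> z = pre @ c # s @ morph \<sigma> v @ p @ d # suf"
      unfolding lang_Y sublist_def by auto
    then obtain z1 a b z3 where ab: "z = z1 @ a # v @ b # z3" "suffix (c # s) (\<sigma> a)"
      "prefix (p @ [d]) (\<sigma> b @ [l])"
      using morph_synchronization[OF slp inj s p] by blast
    have "sublist (a # v @ [b]) z"
      unfolding ab(1) sublist_def by (intro exI[of _ z1] exI[of _ z3]) simp
    with z(1) have "a # v @ [b] \<in> lang X" by (rule lang_sublist)
    with ab show "\<exists>(a, b)\<in>ext_pairs X v. suffix (c # s) (\<sigma> a) \<and> prefix (p @ [d]) (\<sigma> b @ [l])"
      unfolding ext_pairs_def by blast
  next
    assume "\<exists>(a, b)\<in>ext_pairs X v. suffix (c # s) (\<sigma> a) \<and> prefix (p @ [d]) (\<sigma> b @ [l])"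
    then obtain a b where ab: "a # v @ [b] \<in> lang X" "suffix (c # s) (\<sigma> a)"
      "prefix (p @ [d]) (\<sigma> b @ [l])"
      unfolding ext_pairs_def by blast
    obtain e where e: "(a # v @ [b]) @ [e] \<in> lang X" using lang_snoc[OF ab(1)] by blast
    obtain we where we: "\<sigma> e = l # we" using strongly_left_properD[OF slp, of e] by blast
    obtain q where q: "\<sigma> a = q @ c # s" using ab(2) by (auto simp: suffix_def)
    obtain r where r: "\<sigma> b @ [l] = p @ d # r" using ab(3) by (auto simp: prefix_def)
    have "morph \<sigma> ((a # v @ [b]) @ [e]) = q @ c # s @ morph \<sigma> v @ (\<sigma> b @ [l]) @ we"
      using q we by simp
    also have "\<dots> = q @ (c # (s @ morph \<sigma> v @ p) @ [d]) @ r @ we"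
      using r by simp
    finally show "c # (s @ morph \<sigma> v @ p) @ [d] \<in> lang (image_shift \<sigma> X)"
      unfolding lang_Y using e by (metis sublist_appendI)
  qed
  then show ?thesis by (simp add: ext_pairs_def)
qed

lemma suffix_child_exists:
  assumes "x \<in> T" "strict_suffix s x"
  shows "\<exists>t. suffix_child T s t \<and> suffix t x"
proof -
  let ?Q = "\<lambda>t. t \<in> T \<and> strict_suffix s t \<and> suffix t x"
  obtain t where t: "?Q t" and least: "\<And>t'. ?Q t' \<Longrightarrow> length t \<le> length t'"
    using ex_has_least_nat[of ?Q x length] assms by auto
  have "\<not> (\<exists>t'\<in>T. strict_suffix s t' \<and> strict_suffix t' t)"
  proof
    assume "\<exists>t'\<in>T. strict_suffix s t' \<and> strict_suffix t' t"
    then obtain t' where t': "t' \<in> T" "strict_suffix s t'" "strict_suffix t' t" by blast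
    then have "?Q t'" using t suffix_order.less_imp_le suffix_order.trans by blast
    then show False using least t'(3) suffix_length_less by fastforce
  qed
  with t show ?thesis unfolding suffix_child_def by blast
qed

lemma prefix_child_exists:
  assumes "x \<in> T" "strict_prefix p x"
  shows "\<exists>t. prefix_child T p t \<and> prefix t x"
proof -
  let ?Q = "\<lambda>t. t \<in> T \<and> strict_prefix p t \<and> prefix t x"
  obtain t where t: "?Q t" and least: "\<And>t'. ?Q t' \<Longrightarrow> length t \<le> length t'"
    using ex_has_least_nat[of ?Q x length] assms by auto
  have "\<not> (\<exists>t'\<in>T. strict_prefix p t' \<and> strict_prefix t' t)"
  proof
    assume "\<exists>t'\<in>T. strict_prefix p t' \<and> strict_prefix t' t"
    then obtain t' where t': "t' \<in> T" "strict_prefix p t'" "strict_prefix t' t" by blast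
    then have "?Q t'" using t prefix_order.less_imp_le prefix_order.trans by blast
    then show False using least t'(3) prefix_length_less by fastforce
  qed
  with t show ?thesis unfolding prefix_child_def by blast
qed

lemma phi_left_eq:
  assumes a: "a \<in> ext_left X v" and c: "suffix (c # s) (\<sigma> a)"
  shows "phi_left \<sigma> X v s a = c"
  unfolding phi_left_def
proof (rule the_equality)
  have "\<sigma> a \<in> Tminus_bar \<sigma> X v" using a by (simp add: Tminus_bar_def)
  moreover have "strict_suffix s (\<sigma> a)" using c by (rule suffix_ConsD')
  ultimately obtain t where t: "suffix_child (Tminus_bar \<sigma> X v) s t" "suffix t (\<sigma> a)"
    using suffix_child_exists by blast
  then obtain c' where c': "suffix (c' # s) t"
    unfolding suffix_child_def using strict_suffix_Cons_suffix by blast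
  then obtain w where w: "t = w @ [c'] @ s" by (auto simp: suffix_def)
  from c' t(2) have "suffix (c' # s) (\<sigma> a)" by (rule suffix_order.trans)
  then have "c' = c" using c by (rule suffix_Cons_unique)
  with t w a show "\<exists>s'. suffix_child (Tminus_bar \<sigma> X v) s s' \<and> a \<in> ext_left_x \<sigma> X v s' \<and>
      (\<exists>w. s' = w @ [c] @ s)"
    unfolding ext_left_x_def by blast
next
  fix c' assume "\<exists>s'. suffix_child (Tminus_bar \<sigma> X v) s s' \<and> a \<in> ext_left_x \<sigma> X v s' \<and>
      (\<exists>w. s' = w @ [c'] @ s)"
  then have "suffix (c' # s) (\<sigma> a)"
    unfolding ext_left_x_def by (auto intro: suffix_appendD)
  then show "c' = c" using c by (rule suffix_Cons_unique)
qed

lemma phi_right_eq: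
  assumes b: "b \<in> ext_right X v" and d: "prefix (p @ [d]) (\<sigma> b @ [l])"
  shows "phi_right \<sigma> l X v p b = d"
  unfolding phi_right_def
proof (rule the_equality)
  have "\<sigma> b @ [l] \<in> Tplus_bar \<sigma> l X v" using b by (simp add: Tplus_bar_def)
  moreover have "strict_prefix p (\<sigma> b @ [l])" using d by (rule prefix_snocD)
  ultimately obtain t where t: "prefix_child (Tplus_bar \<sigma> l X v) p t" "prefix t (\<sigma> b @ [l])"
    using prefix_child_exists by blast
  then obtain d' where d': "prefix (p @ [d']) t"
    unfolding prefix_child_def using strict_prefix_snoc_prefix by blast
  then obtain w where w: "t = p @ [d'] @ w" by (auto simp: prefix_def)
  from d' t(2) have "prefix (p @ [d']) (\<sigma> b @ [l])" by (rule prefix_order.trans)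
  then have "d' = d" using d by (rule prefix_snoc_unique)
  with t w b show "\<exists>p'. prefix_child (Tplus_bar \<sigma> l X v) p p' \<and> b \<in> ext_right_y \<sigma> l X v p' \<and>
      (\<exists>w. p' = p @ [d] @ w)"
    unfolding ext_right_y_def by blast
next
  fix d' assume "\<exists>p'. prefix_child (Tplus_bar \<sigma> l X v) p p' \<and> b \<in> ext_right_y \<sigma> l X v p' \<and>
      (\<exists>w. p' = p @ [d'] @ w)"
  then obtain w where "prefix (p @ [d'] @ w) (\<sigma> b @ [l])"
    unfolding ext_right_y_def by blast
  moreover have "prefix (p @ [d']) (p @ [d'] @ w)" by (rule prefixI) simp
  ultimately have "prefix (p @ [d']) (\<sigma> b @ [l])" using prefix_order.trans by blast
  then show "d' = d" using d by (rule prefix_snoc_unique)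
qed

lemma ext_pairs_imp_ext_left: "(a, b) \<in> ext_pairs X w \<Longrightarrow> a \<in> ext_left X w"
  unfolding ext_left_eq_fst_ext_pairs by force

lemma ext_pairs_imp_ext_right: "(a, b) \<in> ext_pairs X w \<Longrightarrow> b \<in> ext_right X w"
  unfolding ext_right_eq_snd_ext_pairs by force

lemma ext_pairs_subset: "ext_pairs X w \<subseteq> ext_left X w \<times> ext_right X w"
  by (auto intro: ext_pairs_imp_ext_left ext_pairs_imp_ext_right)

lemma ext_pairs_extended_image_eq_phi:
  assumes slp: "strongly_left_proper \<sigma> l" and inj: "injective_morph \<sigma>"
    and via: "ext_image_via \<sigma> X v s p"
  shows "ext_pairs (image_shift \<sigma> X) (s @ morph \<sigma> v @ p) =
    (\<lambda>(a, b). (phi_left \<sigma> X v s a, phi_right \<sigma> l X v p b)) ` ext_pairs_xy \<sigma> l X v s p"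
    (is "?Y = ?F ` ?E")
proof -
  obtain p' where s: "l \<notin> set s" and p: "p = l # p'" "l \<notin> set p'"
    using ext_image_via_marker[OF slp via] by blast
  note ext_Y = ext_pairs_extended_image_iff[OF slp inj s p]
  show ?thesis
  proof (intro equalityI subsetI)
    fix cd assume "cd \<in> ?Y"
    moreover obtain c d where cd: "cd = (c, d)" by (cases cd)
    ultimately obtain a b where ab: "(a, b) \<in> ext_pairs X v"
      "suffix (c # s) (\<sigma> a)" "prefix (p @ [d]) (\<sigma> b @ [l])"
      using ext_Y[of c d] by blast
    have a: "a \<in> ext_left X v" using ab(1) by (rule ext_pairs_imp_ext_left)
    have b: "b \<in> ext_right X v" using ab(1) by (rule ext_pairs_imp_ext_right)
    have "suffix s (\<sigma> a)" using ab(2) by (rule suffix_ConsD)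
    moreover have "prefix p (\<sigma> b @ [l])"
      using prefix_order.less_imp_le[OF prefix_snocD[OF ab(3)]] .
    ultimately have "(a, b) \<in> ?E"
      using ab(1) a b unfolding ext_pairs_xy_def ext_left_x_def ext_right_y_def by blast
    moreover have "?F (a, b) = cd"
      using phi_left_eq[where \<sigma>=\<sigma>, OF a ab(2)] phi_right_eq[where \<sigma>=\<sigma>, OF b ab(3)] cd by simp
    ultimately show "cd \<in> ?F ` ?E" by force
  next
    fix cd assume "cd \<in> ?F ` ?E"
    then obtain a b where cd: "cd = ?F (a, b)" and ab: "(a, b) \<in> ext_pairs X v"
      "a \<in> ext_left X v" "suffix s (\<sigma> a)" "b \<in> ext_right X v" "prefix p (\<sigma> b @ [l])"
      unfolding ext_pairs_xy_def ext_left_x_def ext_right_y_def by auto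
    obtain w where w: "\<sigma> b = l # w" using strongly_left_properD[OF slp, of b] by blast
    have "s \<noteq> \<sigma> a" using s strongly_left_properD[OF slp, of a] by auto
    with ab(3) have "strict_suffix s (\<sigma> a)" by (simp add: strict_suffix_def)
    then obtain c where c: "suffix (c # s) (\<sigma> a)" using strict_suffix_Cons_suffix by blast
    have "p \<noteq> \<sigma> b @ [l]" using p w by auto
    with ab(5) have "strict_prefix p (\<sigma> b @ [l])" by (simp add: strict_prefix_def)
    then obtain d where d: "prefix (p @ [d]) (\<sigma> b @ [l])" using strict_prefix_snoc_prefix by blast
    have "cd = (c, d)"
      using phi_left_eq[where \<sigma>=\<sigma>, OF ab(2) c] phi_right_eq[where \<sigma>=\<sigma>, OF ab(4) d] cd by simp
    then show "cd \<in> ?Y" using ext_Y[of c d] ab(1) c d by blast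
  qed
qed

lemma card_ge_2_other:
  assumes "2 \<le> card A" "a \<in> A"
  obtains a' where "a' \<in> A" "a' \<noteq> a"
proof -
  have "card (A - {a}) \<noteq> 0" using assms by (simp add: card_Diff_singleton_if)
  then have "A - {a} \<noteq> {}" by force
  then show ?thesis using that by blast
qed

lemma card_ge_2_distinct:
  assumes "2 \<le> card A"
  obtains a1 a2 where "a1 \<in> A" "a2 \<in> A" "a1 \<noteq> a2"
proof -
  have "A \<noteq> {}" using assms by force
  then obtain a1 where "a1 \<in> A" by blast
  with assms show ?thesis using that card_ge_2_other by metis
qed

lemma ext_left_extended_image:
  assumes slp: "strongly_left_proper \<sigma> l" and inj: "injective_morph \<sigma>"
    and s: "l \<notin> set s" and p: "p = l # p'" "l \<notin> set p'"
    and c: "c \<in> ext_left (image_shift \<sigma> X) (s @ morph \<sigma> v @ p)"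
  shows "\<exists>a\<in>ext_left X v. suffix (c # s) (\<sigma> a)"
proof -
  obtain d where "(c, d) \<in> ext_pairs (image_shift \<sigma> X) (s @ morph \<sigma> v @ p)"
    using c unfolding ext_left_eq_fst_ext_pairs by force
  then obtain a b where "(a, b) \<in> ext_pairs X v" "suffix (c # s) (\<sigma> a)"
    using ext_pairs_extended_image_iff[OF slp inj s p, of c d] by blast
  then show ?thesis by (blast intro: ext_pairs_imp_ext_left)
qed

lemma ext_right_extended_image:
  assumes slp: "strongly_left_proper \<sigma> l" and inj: "injective_morph \<sigma>"
    and s: "l \<notin> set s" and p: "p = l # p'" "l \<notin> set p'"
    and d: "d \<in> ext_right (image_shift \<sigma> X) (s @ morph \<sigma> v @ p)"
  shows "\<exists>b\<in>ext_right X v. prefix (p @ [d]) (\<sigma> b @ [l])"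
proof -
  obtain c where "(c, d) \<in> ext_pairs (image_shift \<sigma> X) (s @ morph \<sigma> v @ p)"
    using d unfolding ext_right_eq_snd_ext_pairs by force
  then obtain a b where "(a, b) \<in> ext_pairs X v" "prefix (p @ [d]) (\<sigma> b @ [l])"
    using ext_pairs_extended_image_iff[OF slp inj s p, of c d] by blast
  then show ?thesis by (blast intro: ext_pairs_imp_ext_right)
qed

lemma bispecial_ext_image_via_mem_trees:
  assumes slp: "strongly_left_proper \<sigma> l" and inj: "injective_morph \<sigma>"
    and via: "ext_image_via \<sigma> X v s p"
    and bisp: "bispecial (image_shift \<sigma> X) (s @ morph \<sigma> v @ p)"
  shows "s \<in> Tminus \<sigma> X v" "p \<in> Tplus \<sigma> X v"
proof -
  let ?Y = "image_shift \<sigma> X" and ?u = "s @ morph \<sigma> v @ p"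
  obtain p' where s: "l \<notin> set s" and p: "p = l # p'" "l \<notin> set p'"
    using ext_image_via_marker[OF slp via] by blast
  have "2 \<le> card (ext_left ?Y ?u)" "2 \<le> card (ext_right ?Y ?u)"
    using bisp by (simp_all add: bispecial_def)
  then obtain c1 c2 d1 d2 where c: "c1 \<in> ext_left ?Y ?u" "c2 \<in> ext_left ?Y ?u" "c1 \<noteq> c2"
    and d: "d1 \<in> ext_right ?Y ?u" "d2 \<in> ext_right ?Y ?u" "d1 \<noteq> d2"
    by (metis card_ge_2_distinct)
  obtain a1 a2 where a: "a1 \<in> ext_left X v" "a2 \<in> ext_left X v"
    "suffix (c1 # s) (\<sigma> a1)" "suffix (c2 # s) (\<sigma> a2)"
    using ext_left_extended_image[OF slp inj s p c(1)]
      ext_left_extended_image[OF slp inj s p c(2)] by blast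
  have "a1 \<noteq> a2" using suffix_Cons_unique[OF a(3)] a(4) c(3) by blast
  moreover have "lcsuffix (\<sigma> a1) (\<sigma> a2) = s" using a(3,4) c(3) by (rule lcsuffix_diverge)
  ultimately show "s \<in> Tminus \<sigma> X v" using a(1,2) unfolding Tminus_def by blast
  obtain b1 b2 where b: "b1 \<in> ext_right X v" "b2 \<in> ext_right X v"
    "prefix (p @ [d1]) (\<sigma> b1 @ [l])" "prefix (p @ [d2]) (\<sigma> b2 @ [l])"
    using ext_right_extended_image[OF slp inj s p d(1)]
      ext_right_extended_image[OF slp inj s p d(2)] by blast
  have "b1 \<noteq> b2" using prefix_snoc_unique[OF b(3)] b(4) d(3) by blast
  moreover have "longest_common_prefix (\<sigma> b1) (\<sigma> b2) = p"
    using longest_common_prefix_diverge[OF b(3,4) d(3)]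
      longest_common_prefix_images_snoc[OF slp inj \<open>b1 \<noteq> b2\<close>] by simp
  ultimately show "p \<in> Tplus \<sigma> X v" using b(1,2) unfolding Tplus_def by blast
qed

section \<open>Trees reduced to their roots\<close>

lemma map_pairs_image_mem_iff:
  assumes "inj_on f A" "inj_on g B" "E \<subseteq> A \<times> B" "a \<in> A" "b \<in> B"
  shows "(f a, g b) \<in> (\<lambda>(a, b). (f a, g b)) ` E \<longleftrightarrow> (a, b) \<in> E"
  using inj_on_image_mem_iff[OF map_prod_inj_on[OF assms(1,2)], of "(a, b)" E] assms(3-5)
  by (simp add: map_prod_def)

locale singleton_Tminus_Tplus =
  fixes \<sigma> :: "'a \<Rightarrow> 'b list" and l :: 'b and X :: "(int \<Rightarrow> 'a) set"
    and v :: "'a list" and s0 p0 :: "'b list"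
  assumes slp: "strongly_left_proper \<sigma> l" and inj: "injective_morph \<sigma>"
    and bisp: "bispecial X v"
    and Tminus_s0: "Tminus \<sigma> X v = {s0}" and Tplus_p0: "Tplus \<sigma> X v = {p0}"
begin

lemma lcsuffix_eq_s0: "a1 \<in> ext_left X v \<Longrightarrow> a2 \<in> ext_left X v \<Longrightarrow> a1 \<noteq> a2 \<Longrightarrow>
    lcsuffix (\<sigma> a1) (\<sigma> a2) = s0"
  using Tminus_s0 unfolding Tminus_def by blast

lemma longest_common_prefix_eq_p0: "b1 \<in> ext_right X v \<Longrightarrow> b2 \<in> ext_right X v \<Longrightarrow> b1 \<noteq> b2 \<Longrightarrow>
    longest_common_prefix (\<sigma> b1) (\<sigma> b2) = p0"
  using Tplus_p0 unfolding Tplus_def by blast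

lemma strict_suffix_s0:
  assumes "a \<in> ext_left X v"
  shows "strict_suffix s0 (\<sigma> a)"
proof -
  have "2 \<le> card (ext_left X v)" using bisp by (simp add: bispecial_def)
  then obtain a' where a': "a' \<in> ext_left X v" "a' \<noteq> a" using assms by (rule card_ge_2_other)
  then have "lcsuffix (\<sigma> a) (\<sigma> a') = s0" using lcsuffix_eq_s0[OF assms] by blast
  with lcsuffix_images_strict_suffix[OF slp inj, of a a'] a' show ?thesis by auto
qed

lemma prefix_p0:
  assumes "b \<in> ext_right X v"
  shows "prefix p0 (\<sigma> b)"
proof -
  have "2 \<le> card (ext_right X v)" using bisp by (simp add: bispecial_def)
  then obtain b' where b': "b' \<in> ext_right X v" "b' \<noteq> b" using assms by (rule card_ge_2_other)
  then have "longest_common_prefix (\<sigma> b) (\<sigma> b') = p0"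
    using longest_common_prefix_eq_p0[OF assms] by blast
  with longest_common_prefix_prefix1[of "\<sigma> b" "\<sigma> b'"] show ?thesis by simp
qed

lemma p0_shape: "\<exists>p'. p0 = l # p' \<and> l \<notin> set p'"
proof -
  have "p0 \<in> Tplus \<sigma> X v" using Tplus_p0 by simp
  then obtain b1 b2 where "p0 = longest_common_prefix (\<sigma> b1) (\<sigma> b2)"
    unfolding Tplus_def by blast
  with longest_common_prefix_images_shape[OF slp, of b1 b2] show ?thesis by simp
qed

lemma ext_pairs_xy_s0_p0: "ext_pairs_xy \<sigma> l X v s0 p0 = ext_pairs X v"
proof (intro equalityI subsetI)
  fix ab assume ab: "ab \<in> ext_pairs X v"
  obtain a b where "ab = (a, b)" by (cases ab)
  with ab have "(a, b) \<in> ext_pairs X v" by simp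
  then have a: "a \<in> ext_left X v" and b: "b \<in> ext_right X v"
    by (rule ext_pairs_imp_ext_left, rule ext_pairs_imp_ext_right)
  have "suffix s0 (\<sigma> a)" using strict_suffix_s0[OF a] by (simp add: strict_suffix_def)
  moreover have "prefix p0 (\<sigma> b @ [l])" using prefix_p0[OF b] by (rule prefix_prefix)
  ultimately show "ab \<in> ext_pairs_xy \<sigma> l X v s0 p0"
    using ab \<open>ab = (a, b)\<close> a b
    unfolding ext_pairs_xy_def ext_left_x_def ext_right_y_def by blast
qed (simp add: ext_pairs_xy_def)

lemma ext_image_via_s0_p0: "ext_image_via \<sigma> X v s0 p0"
proof -
  have "ext_left X v \<noteq> {}" using bisp unfolding bispecial_def by force
  then obtain a b where ab: "(a, b) \<in> ext_pairs X v" unfolding ext_left_eq_fst_ext_pairs by force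
  moreover have "strict_suffix s0 (\<sigma> a)" using strict_suffix_s0 ext_pairs_imp_ext_left[OF ab] .
  moreover have "prefix p0 (\<sigma> b)" using prefix_p0 ext_pairs_imp_ext_right[OF ab] .
  moreover have "p0 \<noteq> []" using p0_shape by auto
  moreover have "v \<in> lang X" using bisp by (simp add: bispecial_def)
  ultimately show ?thesis unfolding ext_image_via_def by blast
qed

lemma inj_on_phi_left: "inj_on (phi_left \<sigma> X v s0) (ext_left X v)"
proof (rule inj_onI)
  fix a1 a2 assume a: "a1 \<in> ext_left X v" "a2 \<in> ext_left X v"
    and eq: "phi_left \<sigma> X v s0 a1 = phi_left \<sigma> X v s0 a2"
  obtain c1 where c1: "suffix (c1 # s0) (\<sigma> a1)"
    using strict_suffix_Cons_suffix[OF strict_suffix_s0[OF a(1)]] by blast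
  obtain c2 where c2: "suffix (c2 # s0) (\<sigma> a2)"
    using strict_suffix_Cons_suffix[OF strict_suffix_s0[OF a(2)]] by blast
  have "c1 = c2"
    using eq phi_left_eq[where \<sigma>=\<sigma>, OF a(1) c1] phi_left_eq[where \<sigma>=\<sigma>, OF a(2) c2] by simp
  show "a1 = a2"
  proof (rule ccontr)
    assume "a1 \<noteq> a2"
    have "suffix (c1 # s0) (lcsuffix (\<sigma> a1) (\<sigma> a2))"
      using c1 c2 \<open>c1 = c2\<close> by (simp add: lcsuffix_max_suffix)
    then have "suffix (c1 # s0) s0" using lcsuffix_eq_s0[OF a \<open>a1 \<noteq> a2\<close>] by simp
    then show False using suffix_length_le[of "c1 # s0" s0] by simp
  qed
qed

lemma inj_on_phi_right: "inj_on (phi_right \<sigma> l X v p0) (ext_right X v)"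
proof (rule inj_onI)
  fix b1 b2 assume b: "b1 \<in> ext_right X v" "b2 \<in> ext_right X v"
    and eq: "phi_right \<sigma> l X v p0 b1 = phi_right \<sigma> l X v p0 b2"
  have "strict_prefix p0 (\<sigma> b1 @ [l])" "strict_prefix p0 (\<sigma> b2 @ [l])"
    using prefix_p0[OF b(1)] prefix_p0[OF b(2)] by (auto simp: strict_prefix_def)
  then obtain d1 d2 where d1: "prefix (p0 @ [d1]) (\<sigma> b1 @ [l])"
    and d2: "prefix (p0 @ [d2]) (\<sigma> b2 @ [l])"
    by (meson strict_prefix_snoc_prefix)
  have "d1 = d2"
    using eq phi_right_eq[where \<sigma>=\<sigma>, OF b(1) d1] phi_right_eq[where \<sigma>=\<sigma>, OF b(2) d2] by simp
  show "b1 = b2"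
  proof (rule ccontr)
    assume "b1 \<noteq> b2"
    have "prefix (p0 @ [d1]) (longest_common_prefix (\<sigma> b1 @ [l]) (\<sigma> b2 @ [l]))"
      using d1 d2 \<open>d1 = d2\<close> by (simp add: longest_common_prefix_max_prefix)
    then have "prefix (p0 @ [d1]) p0"
      using longest_common_prefix_images_snoc[OF slp inj \<open>b1 \<noteq> b2\<close>]
        longest_common_prefix_eq_p0[OF b \<open>b1 \<noteq> b2\<close>] by simp
    then show False using prefix_length_le[of "p0 @ [d1]" p0] by simp
  qed
qed

lemma ext_pairs_image_s0_p0:
  "ext_pairs (image_shift \<sigma> X) (s0 @ morph \<sigma> v @ p0) =
    (\<lambda>(a, b). (phi_left \<sigma> X v s0 a, phi_right \<sigma> l X v p0 b)) ` ext_pairs X v"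
  using ext_pairs_extended_image_eq_phi[OF slp inj ext_image_via_s0_p0] ext_pairs_xy_s0_p0 by simp

lemma bij_betw_phi_left:
  "bij_betw (phi_left \<sigma> X v s0) (ext_left X v)
    (ext_left (image_shift \<sigma> X) (s0 @ morph \<sigma> v @ p0))"
  unfolding bij_betw_def using inj_on_phi_left
  by (simp add: ext_left_eq_fst_ext_pairs ext_pairs_image_s0_p0 image_image case_prod_beta)

lemma bij_betw_phi_right:
  "bij_betw (phi_right \<sigma> l X v p0) (ext_right X v)
    (ext_right (image_shift \<sigma> X) (s0 @ morph \<sigma> v @ p0))"
  unfolding bij_betw_def using inj_on_phi_right
  by (simp add: ext_right_eq_snd_ext_pairs ext_pairs_image_s0_p0 image_image case_prod_beta)

lemma ext_pairs_image_s0_p0_iff: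
  assumes "a \<in> ext_left X v" "b \<in> ext_right X v"
  shows "(a, b) \<in> ext_pairs X v \<longleftrightarrow>
    (phi_left \<sigma> X v s0 a, phi_right \<sigma> l X v p0 b) \<in>
      ext_pairs (image_shift \<sigma> X) (s0 @ morph \<sigma> v @ p0)"
  unfolding ext_pairs_image_s0_p0
  using map_pairs_image_mem_iff[OF inj_on_phi_left inj_on_phi_right ext_pairs_subset assms] ..

lemma bispecial_image_s0_p0: "bispecial (image_shift \<sigma> X) (s0 @ morph \<sigma> v @ p0)"
proof -
  let ?Y = "image_shift \<sigma> X" and ?u = "s0 @ morph \<sigma> v @ p0"
  have card: "card (ext_left ?Y ?u) = card (ext_left X v)"
      "card (ext_right ?Y ?u) = card (ext_right X v)"
    using bij_betw_same_card[OF bij_betw_phi_left] bij_betw_same_card[OF bij_betw_phi_right]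
    by simp_all
  with bisp have "ext_left ?Y ?u \<noteq> {}" unfolding bispecial_def by force
  then obtain c where "c # ?u \<in> lang ?Y" unfolding ext_left_def by blast
  then have "?u \<in> lang ?Y"
    by (rule lang_sublist) (metis sublist_append_leftI append_Cons append_Nil)
  with card bisp show ?thesis unfolding bispecial_def by simp
qed

lemma bispecial_extended_image_eq:
  assumes "extended_image \<sigma> X v u" "bispecial (image_shift \<sigma> X) u"
  shows "u = s0 @ morph \<sigma> v @ p0"
proof -
  obtain s p where u: "u = s @ morph \<sigma> v @ p" and via: "ext_image_via \<sigma> X v s p"
    using assms(1) unfolding extended_image_def by blast
  have "s \<in> Tminus \<sigma> X v" "p \<in> Tplus \<sigma> X v"
    using bispecial_ext_image_via_mem_trees[OF slp inj via] assms(2) u by simp_all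
  with u Tminus_s0 Tplus_p0 show ?thesis by simp
qed

end

theorem proposition4p4:
  fixes X :: "(int \<Rightarrow> 'a::finite) set"
    and \<sigma> :: "'a \<Rightarrow> ('b::finite) list"
    and l :: 'b
    and v :: "'a list"
  assumes X: "shift_space X"
    and ne: "non_erasing \<sigma>"
    and inj: "injective_morph \<sigma>"
    and slp: "strongly_left_proper \<sigma> l"
    and v: "v \<in> lang X" "bispecial X v"
  defines "Y \<equiv> image_shift \<sigma> X"
  shows
    "(\<forall>s p. s \<in> Tminus \<sigma> X v \<longrightarrow> p \<in> Tplus \<sigma> X v \<longrightarrow> ext_image_via \<sigma> X v s p \<longrightarrow>
        (let u = s @ morph \<sigma> v @ p; E = ext_pairs_xy \<sigma> l X v s p;
             fL = phi_left \<sigma> X v s; fR = phi_right \<sigma> l X v p in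
          ext_left Y u = fL ` (fst ` E) \<and>
          ext_right Y u = fR ` (snd ` E) \<and>
          ext_pairs Y u = (\<lambda>(a, b). (fL a, fR b)) ` E))
   \<and> (\<forall>s0 p0. Tminus \<sigma> X v = {s0} \<longrightarrow> Tplus \<sigma> X v = {p0} \<longrightarrow>
        (let u = s0 @ morph \<sigma> v @ p0; E = ext_pairs_xy \<sigma> l X v s0 p0;
             fL = phi_left \<sigma> X v s0; fR = phi_right \<sigma> l X v p0 in
          (\<exists>!u'. extended_image \<sigma> X v u' \<and> bispecial Y u') \<and>
          extended_image \<sigma> X v u \<and> bispecial Y u \<and>
          bij_betw fL (fst ` E) (ext_left Y u) \<and>
          bij_betw fR (snd ` E) (ext_right Y u) \<and>
          (\<forall>a\<in>fst ` E. \<forall>b\<in>snd ` E. (a, b) \<in> E \<longleftrightarrow> (fL a, fR b) \<in> ext_pairs Y u)))"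
  \<comment> \<open>The first part holds for all s and p
    with \<open>ext_image_via \<sigma> X v s p\<close>, not only for those in the trees.\<close>
  unfolding Let_def Y_def
  apply (rule conjI; intro allI impI)
  subgoal premises prems for s p
    using ext_pairs_extended_image_eq_phi[OF slp inj prems(3)]
    by (simp add: ext_left_eq_fst_ext_pairs ext_right_eq_snd_ext_pairs image_image case_prod_beta)
  subgoal premises T for s0 p0
  proof -
    interpret singleton_Tminus_Tplus \<sigma> l X v s0 p0 using slp inj v(2) T by unfold_locales
    let ?u = "s0 @ morph \<sigma> v @ p0"
    have ext: "extended_image \<sigma> X v ?u"
      using ext_image_via_s0_p0 unfolding extended_image_def by blast
    have bispecial_u: "bispecial (image_shift \<sigma> X) ?u" by (rule bispecial_image_s0_p0)
    have "\<exists>!u'. extended_image \<sigma> X v u' \<and> bispecial (image_shift \<sigma> X) u'"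
      using ext bispecial_u bispecial_extended_image_eq by blast
    then show ?thesis
      unfolding ext_pairs_xy_s0_p0
        ext_left_eq_fst_ext_pairs[symmetric] ext_right_eq_snd_ext_pairs[symmetric]
      using ext bispecial_u bij_betw_phi_left bij_betw_phi_right ext_pairs_image_s0_p0_iff by blast
  qed
  done

end
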